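(* Let $y_i=\theta_i+\sigma z_i$, $i=1,\dots,n$, where $z_1,\dots,z_n$ are i.i.d. sub-Gaussian with parameter $1$, and let $\alpha_1,\dots,\alpha_k$ denote the Haar wavelet coefficients of the vector $pad_0(y_1,\dots,y_n)\in\mathbb{R}^k$, i.e. $\alpha=H\,pad_0(y_1,\dots,y_n)$. Then each $\alpha_i-\mathbb{E}[\alpha_i]$ is sub-Gaussian with parameter $2\sigma$.
   Context: $pad_0(y_1,\dots,y_n)$ is the vector $(y_1-\bar y,\dots,y_n-\bar y)$, $\bar y=\frac1n\sum_i y_i$, followed by zeros up to length $k$, the smallest power of $2$ that is $\ge n$. $H\in\mathbb{R}^{k\times k}$ is the orthonormal discrete Haar wavelet transform matrix. *)

theory Defs
  imports "HOL-Probability.Probability"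
begin

text \<open>Sub-Gaussian random variable with parameter s (centered convention):
  E[exp(l X)] \<le> exp(l^2 s^2 / 2) for all real l.\<close>
definition subgaussian :: "'a measure \<Rightarrow> ('a \<Rightarrow> real) \<Rightarrow> real \<Rightarrow> bool" where
  "subgaussian M X s \<longleftrightarrow> X \<in> borel_measurable M \<and>
     (\<forall>l::real. integrable M (\<lambda>\<omega>. exp (l * X \<omega>)) \<and>
        (\<integral>\<omega>. exp (l * X \<omega>) \<partial>M) \<le> exp (l^2 * s^2 / 2))"

definition padlen :: "nat \<Rightarrow> nat" where
  "padlen n = (LEAST k. (\<exists>m. k = 2^m) \<and> n \<le> k)"

definition pad0 :: "nat \<Rightarrow> (nat \<Rightarrow> real) \<Rightarrow> nat \<Rightarrow> real" where
  "pad0 n y t = (if t < n then y t - (\<Sum>j<n. y j) / real n else 0)"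

definition haar_level :: "nat \<Rightarrow> nat" where
  "haar_level i = (GREATEST j. 2^j \<le> i)"

text \<open>Row 0 is the scaling vector; row 2^j + l (0 \<le> l < 2^j) is the
  wavelet at level j and shift l, supported on [l 2^(m-j), (l+1) 2^(m-j)).\<close>
definition haar_mat :: "nat \<Rightarrow> nat \<Rightarrow> nat \<Rightarrow> real" where
  "haar_mat m i t =
     (if i = 0 then 1 / sqrt (2 ^ m)
      else (let j = haar_level i; l = i - 2^j; L = 2^(m - j); h = L div 2 in
            if l * L \<le> t \<and> t < l * L + h then sqrt (2 ^ j / 2 ^ m)
            else if l * L + h \<le> t \<and> t < (l + 1) * L then - sqrt (2 ^ j / 2 ^ m)
            else 0))"

end

theory Submission
  imports Defs
begin

text \<open>Since \<open>pad0\<close> only centres the first \<open>n\<close> entries and appends zeros, each Haar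
  coefficient is an affine function \<open>C + \<sigma> \<Sum>\<^sub>t c\<^sub>t z\<^sub>t\<close> of the noise, where \<open>c\<close> is the
  Haar row restricted to the first \<open>n\<close> entries and centred. Centring does not increase the
  Euclidean norm and Haar rows have norm at most 1, so \<open>\<Sum>\<^sub>t c\<^sub>t\<^sup>2 \<le> 1\<close>. By independence the
  moment generating function of \<open>\<Sum>\<^sub>t c\<^sub>t z\<^sub>t\<close> factorises, which gives the parameter
  \<open>\<sigma> \<le> 2\<sigma>\<close>; and sub-Gaussian variables have mean zero, so \<open>C\<close> is the mean.\<close>

lemma subgaussian_integrable:
  assumes "subgaussian M X s"
  shows "integrable M X"
proof (rule Bochner_Integration.integrable_bound)
  have "integrable M (\<lambda>\<omega>. exp (l * X \<omega>))" for l
    using assms by (simp add: subgaussian_def)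
  then show "integrable M (\<lambda>\<omega>. exp (1 * X \<omega>) + exp ((-1) * X \<omega>))"
    by (intro Bochner_Integration.integrable_add)
  show "X \<in> borel_measurable M"
    using assms by (simp add: subgaussian_def)
  show "AE \<omega> in M. norm (X \<omega>) \<le> norm (exp (1 * X \<omega>) + exp ((-1) * X \<omega>))"
  proof (intro AE_I2)
    fix \<omega>
    have "X \<omega> \<le> exp (X \<omega>)" "- X \<omega> \<le> exp (- X \<omega>)"
      using exp_ge_add_one_self[of "X \<omega>"] exp_ge_add_one_self[of "- X \<omega>"] by linarith+
    moreover have "0 < exp (X \<omega>)" "0 < exp (- X \<omega>)" by simp_all
    ultimately show "norm (X \<omega>) \<le> norm (exp (1 * X \<omega>) + exp ((-1) * X \<omega>))"
      unfolding real_norm_def mult_1 mult_minus1 by linarith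
  qed
qed

lemma subgaussian_integral_eq_0:
  assumes "prob_space M" and sg: "subgaussian M X s"
  shows "(\<integral>\<omega>. X \<omega> \<partial>M) = 0"
proof -
  interpret prob_space M by fact
  define e where "e = (\<integral>\<omega>. X \<omega> \<partial>M)"
  have mgf_bound: "l * e \<le> l\<^sup>2 * s\<^sup>2 / 2" for l
  proof -
    have "exp (\<integral>\<omega>. l * X \<omega> \<partial>M) \<le> (\<integral>\<omega>. exp (l * X \<omega>) \<partial>M)"
      using sg subgaussian_integrable[OF sg]
      by (intro jensens_inequality[where I=UNIV]) (auto simp: subgaussian_def exp_convex)
    also have "\<dots> \<le> exp (l\<^sup>2 * s\<^sup>2 / 2)"
      using sg by (simp add: subgaussian_def)
    finally show ?thesis by (simp add: e_def)
  qed
  define d where "d = s\<^sup>2 + 1"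
  have "d > 0" by (simp add: d_def add_nonneg_pos)
  have "e\<^sup>2 / d \<le> e\<^sup>2 * s\<^sup>2 / (2 * d\<^sup>2)"
    using mgf_bound[of "e / d"] by (simp add: power2_eq_square)
  also have "\<dots> \<le> e\<^sup>2 * d / (2 * d\<^sup>2)"
    by (intro divide_right_mono mult_left_mono) (auto simp: d_def)
  also have "\<dots> = e\<^sup>2 / d / 2"
    using \<open>d > 0\<close> by (simp add: power2_eq_square)
  finally have "e\<^sup>2 / d \<le> 0" by simp
  then have "e\<^sup>2 \<le> 0"
    using \<open>d > 0\<close> by (simp add: divide_le_0_iff)
  then show ?thesis by (simp add: e_def)
qed

lemma subgaussian_weighted_sum:
  fixes z :: "'i \<Rightarrow> 'a \<Rightarrow> real"
  assumes "prob_space M" and "finite I"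
    and indep: "prob_space.indep_vars M (\<lambda>_. borel) z I"
    and sg: "\<And>i. i \<in> I \<Longrightarrow> subgaussian M (z i) 1"
    and weights: "(\<Sum>i\<in>I. (a i)\<^sup>2) \<le> S\<^sup>2"
  shows "subgaussian M (\<lambda>\<omega>. \<Sum>i\<in>I. a i * z i \<omega>) S"
  unfolding subgaussian_def
proof (intro conjI allI)
  interpret prob_space M by fact
  have "\<And>i. i \<in> I \<Longrightarrow> z i \<in> borel_measurable M"
    using sg by (simp add: subgaussian_def)
  then show "(\<lambda>\<omega>. \<Sum>i\<in>I. a i * z i \<omega>) \<in> borel_measurable M"
    by (intro borel_measurable_sum borel_measurable_times) auto
  fix l :: real
  have indep_exp: "indep_vars (\<lambda>_. borel) (\<lambda>i \<omega>. exp (l * a i * z i \<omega>)) I"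
    by (rule indep_vars_compose2[OF indep]) auto
  have integrable_exp: "\<And>i. i \<in> I \<Longrightarrow> integrable M (\<lambda>\<omega>. exp (l * a i * z i \<omega>))"
    using sg by (simp add: subgaussian_def)
  have exp_of_sum: "exp (l * (\<Sum>i\<in>I. a i * z i \<omega>)) = (\<Prod>i\<in>I. exp (l * a i * z i \<omega>))" for \<omega>
    using \<open>finite I\<close> by (simp add: exp_sum[symmetric] sum_distrib_left mult.assoc)
  show "integrable M (\<lambda>\<omega>. exp (l * (\<Sum>i\<in>I. a i * z i \<omega>)))"
    unfolding exp_of_sum by (rule indep_vars_integrable[OF \<open>finite I\<close> indep_exp integrable_exp])
  have "(\<integral>\<omega>. exp (l * (\<Sum>i\<in>I. a i * z i \<omega>)) \<partial>M) = (\<Prod>i\<in>I. \<integral>\<omega>. exp (l * a i * z i \<omega>) \<partial>M)"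
    unfolding exp_of_sum by (rule indep_vars_lebesgue_integral[OF \<open>finite I\<close> indep_exp integrable_exp])
  also have "\<dots> \<le> (\<Prod>i\<in>I. exp ((l * a i)\<^sup>2 / 2))"
    using sg by (intro prod_mono) (auto simp: subgaussian_def)
  also have "\<dots> = exp (l\<^sup>2 * (\<Sum>i\<in>I. (a i)\<^sup>2) / 2)"
    using \<open>finite I\<close>
    by (simp add: exp_sum[symmetric] sum_distrib_left sum_divide_distrib power_mult_distrib)
  also have "\<dots> \<le> exp (l\<^sup>2 * S\<^sup>2 / 2)"
    using weights by (simp add: mult_left_mono)
  finally show "(\<integral>\<omega>. exp (l * (\<Sum>i\<in>I. a i * z i \<omega>)) \<partial>M) \<le> exp (l\<^sup>2 * S\<^sup>2 / 2)" .
qed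

lemma subgaussian_centered_affine_combination:
  fixes z :: "'i \<Rightarrow> 'a \<Rightarrow> real"
  assumes "prob_space M" and "finite I"
    and "prob_space.indep_vars M (\<lambda>_. borel) z I"
    and sg: "\<And>i. i \<in> I \<Longrightarrow> subgaussian M (z i) 1"
    and "(\<Sum>i\<in>I. (a i)\<^sup>2) \<le> S\<^sup>2"
    and X: "\<And>\<omega>. X \<omega> = C + (\<Sum>i\<in>I. a i * z i \<omega>)"
  shows "subgaussian M (\<lambda>\<omega>. X \<omega> - (\<integral>\<omega>'. X \<omega>' \<partial>M)) S"
proof -
  interpret prob_space M by fact
  have integrable: "\<And>i. i \<in> I \<Longrightarrow> integrable M (z i)"
    using sg subgaussian_integrable by blast
  have "(\<integral>\<omega>. X \<omega> \<partial>M) = C + (\<integral>\<omega>. (\<Sum>i\<in>I. a i * z i \<omega>) \<partial>M)"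
    unfolding X using integrable by (simp add: prob_space)
  also have "\<dots> = C + (\<Sum>i\<in>I. a i * (\<integral>\<omega>. z i \<omega> \<partial>M))"
    using integrable by (subst Bochner_Integration.integral_sum) auto
  also have "\<dots> = C"
    using subgaussian_integral_eq_0[OF \<open>prob_space M\<close> sg] by (simp add: sum.neutral)
  finally show ?thesis
    using subgaussian_weighted_sum[OF assms(1-5)] by (simp add: X)
qed

lemma sum_square_centered_le:
  fixes a :: "nat \<Rightarrow> real"
  shows "(\<Sum>t<n. (a t - (\<Sum>s<n. a s) / real n)\<^sup>2) \<le> (\<Sum>t<n. (a t)\<^sup>2)"
proof (cases "n = 0")
  case False
  define T where "T = (\<Sum>s<n. a s)"
  define c where "c = T / real n"
  have "(\<Sum>t<n. (a t - c)\<^sup>2) = (\<Sum>t<n. (a t)\<^sup>2) - 2 * c * T + real n * c\<^sup>2"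
    by (simp add: power2_diff sum.distrib sum_subtractf sum_distrib_left T_def algebra_simps)
  also have "\<dots> = (\<Sum>t<n. (a t)\<^sup>2) - T\<^sup>2 / real n"
    using False by (simp add: c_def power2_eq_square field_simps)
  finally show ?thesis by (simp add: T_def c_def)
qed simp

lemma sum_mult_pad0:
  fixes w y :: "nat \<Rightarrow> real"
  assumes "n \<le> N"
  shows "(\<Sum>t<N. w t * pad0 n y t) = (\<Sum>t<n. (w t - (\<Sum>s<n. w s) / real n) * y t)"
proof -
  have "(\<Sum>t<N. w t * pad0 n y t) = (\<Sum>t<n. w t * (y t - (\<Sum>s<n. y s) / real n))"
    using assms by (intro sum.mono_neutral_cong_right) (auto simp: pad0_def)
  also have "\<dots> = (\<Sum>t<n. w t * y t) - (\<Sum>t<n. w t) * ((\<Sum>s<n. y s) / real n)"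
    by (simp only: right_diff_distrib sum_subtractf sum_distrib_right)
  also have "(\<Sum>t<n. w t) * ((\<Sum>s<n. y s) / real n) = (\<Sum>t<n. (\<Sum>s<n. w s) / real n * y t)"
    unfolding sum_distrib_left[symmetric] by simp
  also have "(\<Sum>t<n. w t * y t) - (\<Sum>t<n. (\<Sum>s<n. w s) / real n * y t)
      = (\<Sum>t<n. (w t - (\<Sum>s<n. w s) / real n) * y t)"
    by (simp add: left_diff_distrib sum_subtractf)
  finally show ?thesis .
qed

lemma le_padlen: "n \<le> padlen n"
  unfolding padlen_def by (rule LeastI2[of _ "2 ^ n"]) (auto intro: less_imp_le)

lemma two_power_haar_level_le:
  assumes "i \<ge> 1"
  shows "2 ^ haar_level i \<le> i"
  unfolding haar_level_def
proof (rule GreatestI_nat[of _ 0 i])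
  show "(2::nat) ^ 0 \<le> i" using assms by simp
  show "j \<le> i" if "(2::nat) ^ j \<le> i" for j
    using that less_exp[of j] by linarith
qed

lemma haar_mat_square_le:
  fixes m :: nat
  assumes "i \<noteq> 0"
  defines "j \<equiv> haar_level i"
  defines "L \<equiv> 2 ^ (m - j)"
  shows "(haar_mat m i t)\<^sup>2 \<le> (if t \<in> {(i - 2^j) * L..<(i - 2^j + 1) * L} then 2^j / 2^m else 0)"
  using assms by (auto simp: haar_mat_def Let_def power_divide)

lemma haar_row_sum_square_le_1:
  assumes "i < 2 ^ m"
  shows "(\<Sum>t<2^m. (haar_mat m i t)\<^sup>2) \<le> 1"
proof (cases "i = 0")
  case True
  then show ?thesis by (simp add: haar_mat_def power_divide)
next
  case False
  define j where "j = haar_level i"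
  define L :: nat where "L = 2 ^ (m - j)"
  define A where "A = {(i - 2^j) * L..<(i - 2^j + 1) * L}"
  have "2 ^ j \<le> i"
    using False two_power_haar_level_le[of i] by (simp add: j_def)
  then have "(2::nat) ^ j < 2 ^ m"
    using assms by linarith
  then have "j < m" by simp
  have "(\<Sum>t<2^m. (haar_mat m i t)\<^sup>2) \<le> (\<Sum>t<2^m. if t \<in> A then 2^j / 2^m else 0)"
    unfolding A_def L_def j_def by (intro sum_mono haar_mat_square_le[OF False])
  also have "\<dots> = 2^j / 2^m * card ({..<2^m} \<inter> A)"
    by (simp add: sum.If_cases)
  also have "\<dots> \<le> 2^j / 2^m * card A"
    using card_mono[of A "{..<2^m} \<inter> A"] by (intro mult_left_mono) (auto simp: A_def)
  also have "\<dots> = 1"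
    using \<open>j < m\<close> by (simp add: A_def L_def field_simps flip: power_add)
  finally show ?thesis .
qed

theorem lemma2:
  fixes M :: "'a measure" and z :: "nat \<Rightarrow> 'a \<Rightarrow> real" and \<theta> :: "nat \<Rightarrow> real"
    and \<sigma> :: real and n m :: nat
  assumes "prob_space M"
    and "n \<ge> 1"
    and "prob_space.indep_vars M (\<lambda>_. borel) z {..<n}"
    and "\<And>i. i < n \<Longrightarrow> distr M borel (z i) = distr M borel (z 0)"
    and "\<And>i. i < n \<Longrightarrow> subgaussian M (z i) 1"
    and "2 ^ m = padlen n"
  shows "\<forall>i < 2 ^ m.
     (let y = (\<lambda>\<omega> j. \<theta> j + \<sigma> * z j \<omega>);
          \<alpha> = (\<lambda>\<omega>. \<Sum>t < 2 ^ m. haar_mat m i t * pad0 n (y \<omega>) t)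
      in subgaussian M (\<lambda>\<omega>. \<alpha> \<omega> - (\<integral>\<omega>'. \<alpha> \<omega>' \<partial>M)) (2 * \<sigma>))"
proof (intro allI impI)
  fix i :: nat assume "i < 2 ^ m"
  define c where "c t = haar_mat m i t - (\<Sum>s<n. haar_mat m i s) / real n" for t
  have "n \<le> 2 ^ m" using assms(6) le_padlen by metis
  have "(\<Sum>t<n. (c t)\<^sup>2) \<le> (\<Sum>t<n. (haar_mat m i t)\<^sup>2)"
    unfolding c_def by (rule sum_square_centered_le)
  also have "\<dots> \<le> (\<Sum>t<2^m. (haar_mat m i t)\<^sup>2)"
    using \<open>n \<le> 2 ^ m\<close> by (intro sum_mono2) auto
  also have "\<dots> \<le> 1" by (rule haar_row_sum_square_le_1[OF \<open>i < 2 ^ m\<close>])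
  finally have "\<sigma>\<^sup>2 * (\<Sum>t<n. (c t)\<^sup>2) \<le> \<sigma>\<^sup>2 * 4"
    by (intro mult_left_mono) auto
  then have "(\<Sum>t<n. (\<sigma> * c t)\<^sup>2) \<le> (2 * \<sigma>)\<^sup>2"
    by (simp add: power_mult_distrib sum_distrib_left mult_ac)
  moreover have "(\<Sum>t<2 ^ m. haar_mat m i t * pad0 n (\<lambda>j. \<theta> j + \<sigma> * z j \<omega>) t)
      = (\<Sum>t<n. c t * \<theta> t) + (\<Sum>t<n. \<sigma> * c t * z t \<omega>)" for \<omega>
    unfolding sum_mult_pad0[OF \<open>n \<le> 2 ^ m\<close>] c_def[symmetric]
    by (simp add: distrib_left sum.distrib mult_ac)
  ultimately show "let y = (\<lambda>\<omega> j. \<theta> j + \<sigma> * z j \<omega>);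
          \<alpha> = (\<lambda>\<omega>. \<Sum>t < 2 ^ m. haar_mat m i t * pad0 n (y \<omega>) t)
      in subgaussian M (\<lambda>\<omega>. \<alpha> \<omega> - (\<integral>\<omega>'. \<alpha> \<omega>' \<partial>M)) (2 * \<sigma>)"
    unfolding Let_def
    by (intro subgaussian_centered_affine_combination[OF assms(1) _ assms(3)]) (auto intro: assms(5))
qed

end
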